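(* No deterministic max-finding algorithm has error less than $2$: for every deterministic algorithm that, using comparisons, outputs one of its input elements, there exist an input and comparator answers consistent with the model for which the output element $x$ satisfies $x \le x^* - 2$, where $x^*$ is the maximum value of an input element.
   Context: Model of imprecise comparisons: there are $n$ elements, each with a fixed unknown real value; we identify an element with its value. An algorithm accesses the elements only through a comparator: asked to compare $x_i$ and $x_j$, it answers either "$x_i \ge x_j$" or "$x_j \ge x_i$". If $|x_i-x_j|>1$ the answer is correct; if $|x_i-x_j|\le 1$ the answer is arbitrary (possibly adversarial and adaptive). The error of a max-finding algorithm is the smallest $k$ such that, for every input and every comparator behaviour consistent with this rule, the output $x$ satisfies $x \ge x^*-k$, where $x^*$ is the maximum value among the input elements. *)

theory Defs
  imports Main "HOL.Real"
begin

text \<open>A deterministic comparison-based algorithm on elements indexed 0..n-1 is a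
finite decision tree. Node i j L R: ask the comparator about x_i and x_j;
continue with L if the answer is "x_i >= x_j", with R if the answer is "x_j >= x_i".\<close>

datatype alg = Leaf nat | Cmp nat nat alg alg

fun wf_alg :: "nat \<Rightarrow> alg \<Rightarrow> bool" where
  "wf_alg n (Leaf k) = (k < n)"
| "wf_alg n (Cmp i j l r) = (i < n \<and> j < n \<and> wf_alg n l \<and> wf_alg n r)"

text \<open>run x A k: for input values x, some comparator behaviour consistent with the
imprecise-comparison model (answers correct whenever the values differ by more than 1,
otherwise arbitrary, adaptively) makes algorithm A output element k.\<close>
inductive run :: "(nat \<Rightarrow> real) \<Rightarrow> alg \<Rightarrow> nat \<Rightarrow> bool" where
  leaf: "run x (Leaf k) k"
| left: "\<not> (x j - x i > 1) \<Longrightarrow> run x l k \<Longrightarrow> run x (Cmp i j l r) k"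
| right: "\<not> (x i - x j > 1) \<Longrightarrow> run x r k \<Longrightarrow> run x (Cmp i j l r) k"

end

theory Submission
  imports Defs
begin

text \<open>The adversary fixes all answers in advance: it claims \<open>x\<^sub>i \<ge> x\<^sub>j\<close> exactly when
\<open>i\<close> is the cyclic successor of \<open>j\<close> modulo \<open>n\<close>. Let \<open>k\<close> be the output and \<open>m\<close> its
successor; for \<open>n \<ge> 3\<close> the element \<open>m\<close> beats \<open>k\<close> and \<open>k\<close> never beats \<open>m\<close>. Putting
\<open>x\<^sub>k = 0\<close>, \<open>x\<^sub>m = 2\<close> and all other values \<open>1\<close>, the only pair differing by more than
\<open>1\<close> is \<open>(k, m)\<close>, on which the answers are correct, so every answer is consistent.\<close>

fun follow :: "(nat \<Rightarrow> nat \<Rightarrow> bool) \<Rightarrow> alg \<Rightarrow> nat" where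
  "follow T (Leaf k) = k"
| "follow T (Cmp i j l r) = (if T i j then follow T l else follow T r)"

lemma follow_less: "wf_alg n A \<Longrightarrow> follow T A < n"
  by (induction A) auto

lemma run_follow:
  assumes "\<And>i j. T i j \<Longrightarrow> \<not> x j - x i > 1"
      and "\<And>i j. \<not> T i j \<Longrightarrow> \<not> x i - x j > 1"
  shows "run x A (follow T A)"
proof (induction A)
  case (Leaf k)
  then show ?case by (simp add: run.leaf)
next
  case (Cmp i j l r)
  then show ?case
    using assms[of i j] by (cases "T i j") (simp_all add: run.left run.right)
qed

lemma run_follow_gap_two:
  assumes "T m k" and "\<not> T k m" and "m \<noteq> k"
  shows "run (\<lambda>t. if t = k then 0 else if t = m then 2 else 1 :: real) A (follow T A)"
    (is "run ?x A _")
proof (rule run_follow)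
  have far: "?x j - ?x i > 1 \<Longrightarrow> i = k \<and> j = m" for i j
    using assms(3) by (auto split: if_splits)
  show "\<not> ?x j - ?x i > 1" if "T i j" for i j
    using far that assms(2) by blast
  show "\<not> ?x i - ?x j > 1" if "\<not> T i j" for i j
    using far that assms(1) by blast
qed

definition cyclic_successor :: "nat \<Rightarrow> nat \<Rightarrow> nat \<Rightarrow> bool" where
  "cyclic_successor n i j \<longleftrightarrow> i = Suc j mod n"

lemma cyclic_successor_not_back:
  assumes "n \<ge> 3" and "k < n"
  shows "\<not> cyclic_successor n k (Suc k mod n)"
proof -
  have "Suc (Suc k mod n) mod n = (k + 2) mod n"
    by (simp add: mod_Suc_eq)
  moreover have "(k + 2) mod n \<noteq> k"
    using assms by (cases "k + 2 < n") (auto simp: mod_if)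
  ultimately show ?thesis
    unfolding cyclic_successor_def by simp
qed

theorem mainTheorem2:
  fixes n :: nat and A :: alg
  assumes "n \<ge> 3" and "wf_alg n A"
  shows "\<exists>(x :: nat \<Rightarrow> real) k. run x A k \<and> x k \<le> Max (x ` {..<n}) - 2"
proof -
  define T where "T = cyclic_successor n"
  define k where "k = follow T A"
  define m where "m = Suc k mod n"
  define x where "x = (\<lambda>t. if t = k then 0 else if t = m then 2 else 1 :: real)"
  have "k < n"
    unfolding k_def using assms(2) by (rule follow_less)
  then have "m < n" and "m \<noteq> k"
    using assms(1) by (auto simp: m_def mod_if)
  have "T m k"
    by (simp add: T_def m_def cyclic_successor_def)
  moreover have "\<not> T k m"
    unfolding T_def m_def using assms(1) \<open>k < n\<close> by (rule cyclic_successor_not_back)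
  ultimately have "run x A k"
    using run_follow_gap_two \<open>m \<noteq> k\<close> unfolding x_def k_def by blast
  moreover have "x m \<le> Max (x ` {..<n})"
    using \<open>m < n\<close> by (intro Max_ge) auto
  ultimately show ?thesis
    using \<open>m \<noteq> k\<close> by (intro exI[of _ x] exI[of _ k]) (simp add: x_def)
qed

end
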